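(* Let $\rho$, $\sigma$, $\tau$ be non-crossing partitions of sizes $k$, $\ell$, $m$ respectively. Let $I=(i(1),\dots,i(k))$ be a leftmost occurrence of $\rho$ in $\tau$, let $J=(j(1),\dots,j(\ell))$ be a topmost occurrence of $\sigma$ in $\tau$, and let $H=(h(1),\dots,h(k+\ell))$ be any occurrence of $\rho[\sigma]$ in $\tau$. Then both $(i(1),\dots,i(k),h(k+1),\dots,h(k+\ell))$ and $(h(1),\dots,h(k),j(1),\dots,j(\ell))$ are occurrences of $\rho[\sigma]$ in $\tau$. In particular, $\tau$ contains $\rho[\sigma]$ if and only if $(i(1),\dots,i(k),j(1),\dots,j(\ell))$ is an occurrence of $\rho[\sigma]$ in $\tau$.
   Context: Set partitions are written in canonical sequential form (restricted growth words: $\pi_1=1$, $\pi_{i+1}\le\max(\pi_1,\dots,\pi_i)+1$, $\pi_j$ = index of the block of $j$, blocks ordered by minima). A partition is non-crossing if it avoids $1212$, i.e. has no indices $i<j<k<l$ with $\pi_i=\pi_k<\pi_j=\pi_l$. For partitions $\rho,\sigma$, $\rho[\sigma]$ denotes the concatenation of $\rho$ with $\sigma+r$, where $r$ is the number of blocks of $\rho$ and $\sigma+r$ adds $r$ to every letter. An occurrence of $\sigma=\sigma_1\cdots\sigma_k$ in $\tau=\tau_1\cdots\tau_n$ is a sequence $1\le i(1)<\dots<i(k)\le n$ with $\tau_{i(1)}\cdots\tau_{i(k)}$ order-isomorphic to $\sigma$. It is leftmost if $i(k)$ is minimal among all occurrences, and topmost if $\tau_{i(1)}$ is maximal among all occurrences.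 If $\sigma$ is empty, the empty sequence is its unique occurrence, both leftmost and topmost. *)

theory Defs
  imports Main
begin

text \<open>Words are lists of naturals; positions are 0-based list indices
 (position p in the list corresponds to index p+1 in the paper).\<close>

definition set_partition :: "nat list \<Rightarrow> bool" where
  "set_partition w \<longleftrightarrow>
     (\<forall>x\<in>set w. 1 \<le> x) \<and>
     (w \<noteq> [] \<longrightarrow> w ! 0 = 1) \<and>
     (\<forall>i. Suc i < length w \<longrightarrow> w ! Suc i \<le> Max (set (take (Suc i) w)) + 1)"

definition noncrossing :: "nat list \<Rightarrow> bool" where
  "noncrossing w \<longleftrightarrow>
     \<not> (\<exists>i j k l. i < j \<and> j < k \<and> k < l \<and> l < length w \<and>
            w ! i = w ! k \<and> w ! k < w ! j \<and> w ! j = w ! l)"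

definition num_blocks :: "nat list \<Rightarrow> nat" where
  "num_blocks w = (if w = [] then 0 else Max (set w))"

definition pconcat :: "nat list \<Rightarrow> nat list \<Rightarrow> nat list" where
  "pconcat \<rho> \<sigma> = \<rho> @ map (\<lambda>x. x + num_blocks \<rho>) \<sigma>"

definition order_iso :: "nat list \<Rightarrow> nat list \<Rightarrow> bool" where
  "order_iso u v \<longleftrightarrow> length u = length v \<and>
     (\<forall>a < length u. \<forall>b < length u. (u ! a \<le> u ! b \<longleftrightarrow> v ! a \<le> v ! b))"

definition occurrence :: "nat list \<Rightarrow> nat list \<Rightarrow> nat list \<Rightarrow> bool" where
  "occurrence \<sigma> \<tau> I \<longleftrightarrow> length I = length \<sigma> \<and> sorted_wrt (<) I \<and>
     (\<forall>i\<in>set I. i < length \<tau>) \<and> order_iso (map (\<lambda>i. \<tau> ! i) I) \<sigma>"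

definition leftmost_occurrence :: "nat list \<Rightarrow> nat list \<Rightarrow> nat list \<Rightarrow> bool" where
  "leftmost_occurrence \<sigma> \<tau> I \<longleftrightarrow> occurrence \<sigma> \<tau> I \<and>
     (I \<noteq> [] \<longrightarrow> (\<forall>I'. occurrence \<sigma> \<tau> I' \<longrightarrow> last I \<le> last I'))"

definition topmost_occurrence :: "nat list \<Rightarrow> nat list \<Rightarrow> nat list \<Rightarrow> bool" where
  "topmost_occurrence \<sigma> \<tau> J \<longleftrightarrow> occurrence \<sigma> \<tau> J \<and>
     (J \<noteq> [] \<longrightarrow> (\<forall>J'. occurrence \<sigma> \<tau> J' \<longrightarrow> \<tau> ! hd J' \<le> \<tau> ! hd J))"

end

theory Submission
  imports Defs
begin

text \<open>If \<open>h < b\<close> and \<open>\<tau>\<^sub>h < \<tau>\<^sub>b\<close>, then every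
  position left of \<open>h\<close> carries a value below \<open>\<tau>\<^sub>b\<close>: otherwise, by restricted growth, the
  block of \<open>b\<close> already has an element left of \<open>h\<close>, and together with \<open>h\<close> and \<open>b\<close> it would
  produce a crossing. An occurrence of \<open>\<rho>[\<sigma>]\<close> is an occurrence \<open>A\<close> of \<open>\<rho>\<close> followed by an
  occurrence \<open>B\<close> of \<open>\<sigma>\<close> lying entirely to the right of and above \<open>A\<close>. Replacing \<open>A\<close> by a
  leftmost occurrence only moves positions to the left of \<open>last A\<close>, which therefore stay
  below \<open>B\<close>. Replacing \<open>B\<close> by a topmost occurrence \<open>J\<close> only raises the values, and a
  position of \<open>J\<close> left of some \<open>a \<in> A\<close> would again sit left of the lower \<open>a\<close>, forcing its
  value below \<open>\<tau>\<^sub>b\<close> for \<open>b = hd B\<close>.\<close>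

lemma set_partition_pos: "set_partition w \<Longrightarrow> x \<in> set w \<Longrightarrow> 0 < x"
  unfolding set_partition_def by auto

lemma set_partition_value_in_prefix:
  assumes sp: "set_partition w"
  shows "n \<le> length w \<Longrightarrow> v \<in> set (take n w) \<Longrightarrow> 0 < u \<Longrightarrow> u \<le> v \<Longrightarrow> u \<in> set (take n w)"
proof (induction n arbitrary: v)
  case 0
  then show ?case by simp
next
  case (Suc n)
  have take_Suc: "take (Suc n) w = take n w @ [w ! n]"
    using Suc.prems(1) by (simp add: take_Suc_conv_app_nth)
  consider "v \<in> set (take n w)" | "u = w ! n" | "v = w ! n" "u < w ! n"
    using Suc.prems(2,4) take_Suc by fastforce
  then show ?case
  proof cases
    case 1
    then have "u \<in> set (take n w)" using Suc by simp
    then show ?thesis using take_Suc by simp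
  next
    case 2
    then show ?thesis using take_Suc by simp
  next
    case 3
    show ?thesis
    proof (cases "n = 0")
      case True
      then show ?thesis using sp Suc.prems 3 unfolding set_partition_def by auto
    next
      case False
      have growth: "w ! n \<le> Max (set (take n w)) + 1"
        using sp Suc.prems(1) False unfolding set_partition_def
        by (metis Suc_le_lessD Suc_pred neq0_conv)
      have Max: "Max (set (take n w)) \<in> set (take n w)"
        using False Suc.prems(1) by (intro Max_in) auto
      moreover have "u \<le> Max (set (take n w))" using growth 3 by simp
      ultimately have "u \<in> set (take n w)"
        using Suc.IH Suc.prems(1,3) by simp
      then show ?thesis using take_Suc by simp
    qed
  qed
qed

lemma set_partition_value_earlier:
  assumes "set_partition w" "p < length w" "0 < u" "u \<le> w ! p"
  obtains i where "i \<le> p" "w ! i = u"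
proof -
  have "w ! p \<in> set (take (Suc p) w)"
    using assms(2) by (simp add: take_Suc_conv_app_nth)
  then have "u \<in> set (take (Suc p) w)"
    using set_partition_value_in_prefix[OF assms(1)] assms by simp
  then obtain i where "i < length (take (Suc p) w)" "take (Suc p) w ! i = u"
    by (auto simp: in_set_conv_nth)
  then show ?thesis using that[of i] by auto
qed

lemma noncrossing_between_same_block:
  assumes sp: "set_partition w" and nc: "noncrossing w"
    and "f < h" "h < b" "b < length w" "w ! f = w ! b"
  shows "w ! b \<le> w ! h"
proof (rule ccontr)
  assume lower: "\<not> w ! b \<le> w ! h"
  have "0 < w ! h" using set_partition_pos[OF sp] assms(4,5) by simp
  moreover have "w ! h \<le> w ! f" using lower assms(6) by simp
  moreover have "f < length w" using assms(3-5) by simp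
  ultimately obtain i where "i \<le> f" "w ! i = w ! h"
    using set_partition_value_earlier[OF sp] by blast
  moreover have "i \<noteq> f" using \<open>w ! i = w ! h\<close> lower assms(6) by auto
  ultimately have "i < f \<and> f < h \<and> h < b \<and> b < length w \<and>
      w ! i = w ! h \<and> w ! h < w ! f \<and> w ! f = w ! b"
    using lower assms by simp
  moreover have "\<not> (i < f \<and> f < h \<and> h < b \<and> b < length w \<and>
      w ! i = w ! h \<and> w ! h < w ! f \<and> w ! f = w ! b)"
    using nc unfolding noncrossing_def by blast
  ultimately show False by blast
qed

lemma noncrossing_before_lower:
  assumes sp: "set_partition w" and nc: "noncrossing w"
    and "i < h" "h < b" "b < length w" "w ! h < w ! b"
  shows "w ! i < w ! b"
proof (rule ccontr)
  assume "\<not> w ! i < w ! b"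
  then have "w ! b \<le> w ! i" by simp
  moreover have "0 < w ! b" using set_partition_pos[OF sp] assms(5) by simp
  moreover have "i < length w" using assms(3-5) by simp
  ultimately obtain f where "f \<le> i" "w ! f = w ! b"
    using set_partition_value_earlier[OF sp] by blast
  moreover have "f < h" using \<open>f \<le> i\<close> assms(3) by simp
  ultimately have "w ! b \<le> w ! h"
    using noncrossing_between_same_block[OF sp nc _ assms(4,5)] by simp
  with assms(6) show False by simp
qed

lemma order_iso_appendD:
  assumes len: "length u1 = length v1" and sep: "\<forall>x\<in>set v1. \<forall>y\<in>set v2. x < y"
    and iso: "order_iso (u1 @ u2) (v1 @ v2)"
  shows "order_iso u1 v1 \<and> order_iso u2 v2 \<and> (\<forall>x\<in>set u1. \<forall>y\<in>set u2. x < y)"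
proof -
  have len2: "length u2 = length v2" using iso len unfolding order_iso_def by simp
  have cmp: "\<forall>a<length (u1 @ u2). \<forall>b<length (u1 @ u2).
      ((u1 @ u2) ! a \<le> (u1 @ u2) ! b \<longleftrightarrow> (v1 @ v2) ! a \<le> (v1 @ v2) ! b)"
    using iso unfolding order_iso_def by simp
  have "order_iso u1 v1"
    unfolding order_iso_def
  proof (intro conjI allI impI len)
    fix a b assume "a < length u1" "b < length u1"
    then show "(u1 ! a \<le> u1 ! b) = (v1 ! a \<le> v1 ! b)"
      using cmp[rule_format, of a b] len by (simp add: nth_append)
  qed
  moreover have "order_iso u2 v2"
    unfolding order_iso_def
  proof (intro conjI allI impI len2)
    fix a b assume "a < length u2" "b < length u2"
    then show "(u2 ! a \<le> u2 ! b) = (v2 ! a \<le> v2 ! b)"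
      using cmp[rule_format, of "length u1 + a" "length u1 + b"] len by (simp add: nth_append)
  qed
  moreover have "\<forall>x\<in>set u1. \<forall>y\<in>set u2. x < y"
  proof (intro ballI)
    fix x y assume "x \<in> set u1" "y \<in> set u2"
    then obtain a b where ab: "a < length u1" "x = u1 ! a" "b < length u2" "y = u2 ! b"
      by (auto simp: in_set_conv_nth)
    then have "v1 ! a < v2 ! b" using sep len len2 by auto
    then show "x < y"
      using cmp[rule_format, of "length u1 + b" a] ab len by (auto simp: nth_append)
  qed
  ultimately show ?thesis by blast
qed

lemma order_iso_appendI:
  assumes len: "length u1 = length v1" and sep: "\<forall>x\<in>set v1. \<forall>y\<in>set v2. x < y"
    and iso1: "order_iso u1 v1" and iso2: "order_iso u2 v2"
    and less: "\<forall>x\<in>set u1. \<forall>y\<in>set u2. x < y"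
  shows "order_iso (u1 @ u2) (v1 @ v2)"
proof -
  have len2: "length u2 = length v2" using iso2 unfolding order_iso_def by simp
  have cmp1: "\<forall>a<length u1. \<forall>b<length u1. (u1 ! a \<le> u1 ! b) = (v1 ! a \<le> v1 ! b)"
    and cmp2: "\<forall>a<length u2. \<forall>b<length u2. (u2 ! a \<le> u2 ! b) = (v2 ! a \<le> v2 ! b)"
    using iso1 iso2 unfolding order_iso_def by auto
  have across: "u1 ! a < u2 ! b \<and> v1 ! a < v2 ! b" if "a < length u1" "b < length u2" for a b
    using less sep len len2 that by auto
  show ?thesis
    unfolding order_iso_def
  proof (intro conjI allI impI)
    fix a b assume a: "a < length (u1 @ u2)" and b: "b < length (u1 @ u2)"
    show "((u1 @ u2) ! a \<le> (u1 @ u2) ! b) = ((v1 @ v2) ! a \<le> (v1 @ v2) ! b)"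
    proof (cases "a < length u1"; cases "b < length u1")
      assume "a < length u1" "b < length u1"
      then show ?thesis using cmp1 len by (simp add: nth_append)
    next
      assume ab: "a < length u1" "\<not> b < length u1"
      moreover have "b - length u1 < length u2" using ab b by simp
      ultimately have "u1 ! a < u2 ! (b - length u1)" "v1 ! a < v2 ! (b - length u1)"
        using across by auto
      then show ?thesis using ab len by (simp add: nth_append less_imp_le)
    next
      assume ab: "\<not> a < length u1" "b < length u1"
      moreover have "a - length u1 < length u2" using ab a by simp
      ultimately have "u1 ! b < u2 ! (a - length u1)" "v1 ! b < v2 ! (a - length u1)"
        using across by auto
      then show ?thesis using ab len by (simp add: nth_append not_le)
    next
      assume "\<not> a < length u1" "\<not> b < length u1"
      then show ?thesis
        using cmp2[rule_format, of "a - length u1" "b - length u1"] a b len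
        by (auto simp: nth_append)
    qed
  qed (use len len2 in simp)
qed

lemma order_iso_append:
  assumes "length u1 = length v1" "\<forall>x\<in>set v1. \<forall>y\<in>set v2. x < y"
  shows "order_iso (u1 @ u2) (v1 @ v2) \<longleftrightarrow>
     order_iso u1 v1 \<and> order_iso u2 v2 \<and> (\<forall>x\<in>set u1. \<forall>y\<in>set u2. x < y)"
  using order_iso_appendD[OF assms] order_iso_appendI[OF assms] by auto

lemma order_iso_map_add: "order_iso u (map (\<lambda>x. x + r) v) \<longleftrightarrow> order_iso u v"
  unfolding order_iso_def by auto

definition left_below :: "nat list \<Rightarrow> nat list \<Rightarrow> nat list \<Rightarrow> bool" where
  "left_below \<tau> A B \<longleftrightarrow> (\<forall>a\<in>set A. \<forall>b\<in>set B. a < b \<and> \<tau> ! a < \<tau> ! b)"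

lemma occurrence_pconcat_iff:
  assumes pos: "0 \<notin> set \<sigma>" and len: "length A = length \<rho>"
  shows "occurrence (pconcat \<rho> \<sigma>) \<tau> (A @ B) \<longleftrightarrow>
     occurrence \<rho> \<tau> A \<and> occurrence \<sigma> \<tau> B \<and> left_below \<tau> A B"
proof -
  have sep: "\<forall>x\<in>set \<rho>. \<forall>y\<in>set (map (\<lambda>x. x + num_blocks \<rho>) \<sigma>). x < y"
  proof (intro ballI)
    fix x y assume x: "x \<in> set \<rho>" and "y \<in> set (map (\<lambda>x. x + num_blocks \<rho>) \<sigma>)"
    then obtain z where z: "z \<in> set \<sigma>" "y = z + num_blocks \<rho>" by auto
    have "x \<le> num_blocks \<rho>" using x unfolding num_blocks_def by auto
    moreover have "0 < z" using pos z(1) by (metis neq0_conv)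
    ultimately show "x < y" using z(2) by simp
  qed
  have "length (map ((!) \<tau>) A) = length \<rho>" using len by simp
  from order_iso_append[OF this sep, of "map ((!) \<tau>) B"]
  have "order_iso (map ((!) \<tau>) A @ map ((!) \<tau>) B) (\<rho> @ map (\<lambda>x. x + num_blocks \<rho>) \<sigma>)
     \<longleftrightarrow> order_iso (map ((!) \<tau>) A) \<rho> \<and> order_iso (map ((!) \<tau>) B) \<sigma>
         \<and> (\<forall>a\<in>set A. \<forall>b\<in>set B. \<tau> ! a < \<tau> ! b)"
    by (simp add: order_iso_map_add)
  then show ?thesis
    unfolding occurrence_def pconcat_def left_below_def
    using len by (auto simp: sorted_wrt_append)
qed

lemma occurrence_pconcat_split:
  assumes "0 \<notin> set \<sigma>" "occurrence (pconcat \<rho> \<sigma>) \<tau> H"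
  shows "occurrence \<rho> \<tau> (take (length \<rho>) H)" "occurrence \<sigma> \<tau> (drop (length \<rho>) H)"
    and "left_below \<tau> (take (length \<rho>) H) (drop (length \<rho>) H)"
proof -
  have "length (take (length \<rho>) H) = length \<rho>"
    using assms(2) unfolding occurrence_def pconcat_def by simp
  from occurrence_pconcat_iff[OF assms(1) this, of \<tau> "drop (length \<rho>) H"]
  show "occurrence \<rho> \<tau> (take (length \<rho>) H)" "occurrence \<sigma> \<tau> (drop (length \<rho>) H)"
    and "left_below \<tau> (take (length \<rho>) H) (drop (length \<rho>) H)"
    using assms(2) by simp_all
qed

lemma sorted_wrt_less_le_last: "sorted_wrt (<) xs \<Longrightarrow> x \<in> set xs \<Longrightarrow> x \<le> (last xs :: 'a::order)"
  by (induction xs) (auto simp: less_imp_le)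

lemma occurrence_hd_le:
  assumes "set_partition \<sigma>" "occurrence \<sigma> \<tau> J" "j \<in> set J"
  shows "\<tau> ! hd J \<le> \<tau> ! j"
proof -
  obtain x where x: "x < length J" "j = J ! x" using assms(3) by (auto simp: in_set_conv_nth)
  have len: "length J = length \<sigma>" and iso: "order_iso (map ((!) \<tau>) J) \<sigma>"
    using assms(2) unfolding occurrence_def by auto
  have "\<sigma> ! 0 \<le> \<sigma> ! x"
    using assms(1) x len set_partition_pos[OF assms(1), of "\<sigma> ! x"]
    unfolding set_partition_def by auto
  then have "\<tau> ! (J ! 0) \<le> \<tau> ! (J ! x)"
    using iso x len unfolding order_iso_def by (metis length_map gr_zeroI less_nat_zero_code nth_map)
  moreover have "J \<noteq> []" using x by auto
  ultimately show ?thesis using x by (simp add: hd_conv_nth)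
qed

lemma leftmost_occurrence_left_below:
  assumes sp: "set_partition \<tau>" and nc: "noncrossing \<tau>"
    and I: "leftmost_occurrence \<rho> \<tau> I" and A: "occurrence \<rho> \<tau> A"
    and AB: "left_below \<tau> A B" and B: "\<forall>b\<in>set B. b < length \<tau>"
  shows "left_below \<tau> I B"
  unfolding left_below_def
proof (intro ballI)
  fix a b assume a: "a \<in> set I" and b: "b \<in> set B"
  have "length A = length I" using I A unfolding leftmost_occurrence_def occurrence_def by simp
  with a have "last A \<in> set A" by (cases A) auto
  then have h: "last A < b" "\<tau> ! last A < \<tau> ! b" using AB b unfolding left_below_def by auto
  have "a \<le> last I"
    using sorted_wrt_less_le_last a I unfolding leftmost_occurrence_def occurrence_def by blast
  also have "last I \<le> last A" using I A a unfolding leftmost_occurrence_def by auto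
  finally have "a \<le> last A" .
  then show "a < b \<and> \<tau> ! a < \<tau> ! b"
    using noncrossing_before_lower[OF sp nc _ h(1) _ h(2)] h b B by (cases "a = last A") auto
qed

lemma topmost_occurrence_left_below:
  assumes sp: "set_partition \<tau>" and nc: "noncrossing \<tau>" and sp\<sigma>: "set_partition \<sigma>"
    and J: "topmost_occurrence \<sigma> \<tau> J" and B: "occurrence \<sigma> \<tau> B" and AB: "left_below \<tau> A B"
  shows "left_below \<tau> A J"
  unfolding left_below_def
proof (intro ballI)
  fix a j assume a: "a \<in> set A" and j: "j \<in> set J"
  have occJ: "occurrence \<sigma> \<tau> J" using J unfolding topmost_occurrence_def by simp
  have "length B = length J" using occJ B unfolding occurrence_def by simp
  with j have hd_B: "hd B \<in> set B" by (cases B) auto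
  then have ab: "a < hd B" "\<tau> ! a < \<tau> ! hd B" using AB a unfolding left_below_def by auto
  have "\<tau> ! hd B \<le> \<tau> ! hd J" using J B j unfolding topmost_occurrence_def by auto
  also have "\<tau> ! hd J \<le> \<tau> ! j" using occurrence_hd_le[OF sp\<sigma> occJ j] .
  finally have "\<tau> ! hd B \<le> \<tau> ! j" .
  moreover have "hd B < length \<tau>" using B hd_B unfolding occurrence_def by auto
  ultimately have "\<not> j < a"
    using noncrossing_before_lower[OF sp nc _ ab(1) _ ab(2)] by fastforce
  then show "a < j \<and> \<tau> ! a < \<tau> ! j"
    using ab \<open>\<tau> ! hd B \<le> \<tau> ! j\<close> by (cases "a = j") auto
qed

lemma occurrence_pconcat_leftmost_prefix:
  assumes "set_partition \<sigma>" "set_partition \<tau>" "noncrossing \<tau>"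
    and I: "leftmost_occurrence \<rho> \<tau> I" and H: "occurrence (pconcat \<rho> \<sigma>) \<tau> H"
  shows "occurrence (pconcat \<rho> \<sigma>) \<tau> (I @ drop (length \<rho>) H)"
proof -
  have pos: "0 \<notin> set \<sigma>" using set_partition_pos[OF assms(1)] by blast
  note split = occurrence_pconcat_split[OF pos H]
  have occI: "occurrence \<rho> \<tau> I" using I unfolding leftmost_occurrence_def by simp
  have "\<forall>b\<in>set (drop (length \<rho>) H). b < length \<tau>"
    using split(2) unfolding occurrence_def by simp
  then have "left_below \<tau> I (drop (length \<rho>) H)"
    using leftmost_occurrence_left_below[OF assms(2,3) I split(1,3)] by blast
  moreover have "length I = length \<rho>" using occI unfolding occurrence_def by simp
  ultimately show ?thesis using occurrence_pconcat_iff[OF pos] occI split(2) by simp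
qed

lemma occurrence_pconcat_topmost_suffix:
  assumes "set_partition \<sigma>" "set_partition \<tau>" "noncrossing \<tau>"
    and J: "topmost_occurrence \<sigma> \<tau> J" and H: "occurrence (pconcat \<rho> \<sigma>) \<tau> H"
  shows "occurrence (pconcat \<rho> \<sigma>) \<tau> (take (length \<rho>) H @ J)"
proof -
  have pos: "0 \<notin> set \<sigma>" using set_partition_pos[OF assms(1)] by blast
  note split = occurrence_pconcat_split[OF pos H]
  have "left_below \<tau> (take (length \<rho>) H) J"
    using topmost_occurrence_left_below[OF assms(2,3,1) J split(2,3)] .
  moreover have "length (take (length \<rho>) H) = length \<rho>"
    using H unfolding occurrence_def pconcat_def by simp
  moreover have "occurrence \<sigma> \<tau> J" using J unfolding topmost_occurrence_def by simp
  ultimately show ?thesis using occurrence_pconcat_iff[OF pos] split(1) by simp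
qed

theorem lemma3p1:
  fixes \<rho> \<sigma> \<tau> I J :: "nat list"
  assumes "set_partition \<rho>" "noncrossing \<rho>"
      and "set_partition \<sigma>" "noncrossing \<sigma>"
      and "set_partition \<tau>" "noncrossing \<tau>"
      and "leftmost_occurrence \<rho> \<tau> I"
      and "topmost_occurrence \<sigma> \<tau> J"
  shows "(\<forall>H. occurrence (pconcat \<rho> \<sigma>) \<tau> H \<longrightarrow>
            occurrence (pconcat \<rho> \<sigma>) \<tau> (I @ drop (length \<rho>) H) \<and>
            occurrence (pconcat \<rho> \<sigma>) \<tau> (take (length \<rho>) H @ J))
       \<and> ((\<exists>H. occurrence (pconcat \<rho> \<sigma>) \<tau> H) \<longleftrightarrow> occurrence (pconcat \<rho> \<sigma>) \<tau> (I @ J))"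
proof -
  note prefix = occurrence_pconcat_leftmost_prefix[OF assms(3,5,6,7)]
    and suffix = occurrence_pconcat_topmost_suffix[OF assms(3,5,6,8)]
  have "length I = length \<rho>"
    using assms(7) unfolding leftmost_occurrence_def occurrence_def by simp
  then have "occurrence (pconcat \<rho> \<sigma>) \<tau> (I @ J)" if "occurrence (pconcat \<rho> \<sigma>) \<tau> H" for H
    using suffix[OF prefix[OF that]] by simp
  then show ?thesis using prefix suffix by blast
qed

end
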